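(* Let $Y(\mathbb{R}^n)$ be a translation-invariant Banach function space and $\varphi$ a nonincreasing function such that $\varphi(r)\to0$ as $r\to+\infty$ and $r\varphi(r)$ is nondecreasing for $r\ge1$. Suppose $w:\mathbb{R}^n\to[0,\infty]$ is a weight with $w,1/w\in L^\infty_{\rm loc}(\mathbb{R}^n)$ and there exist $C_0,C_1>0$, $\gamma>0$ and $\theta\in\mathbb{R}^n$ with $|\theta|=1$ such that \[ C_0\exp(|x|\varphi(|x|))\le w(x)\le C_1\exp(|x|\varphi(|x|))\quad\text{whenever } \Big|\frac{x}{|x|}-\theta\Big|<\gamma,\ |x|\ge1. \] Then $X(\mathbb{R}^n)=Y(\mathbb{R}^n,w)$ satisfies the weak doubling property and there exists a constant $C>0$ such that $\|\chi_{B(0,R)}\|_{X(\mathbb{R}^n)}\ge C\exp(R\varphi(R))$ for all sufficiently large $R$.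
   Context: Banach function spaces: let $\mathfrak{M}^+(\mathbb{R}^n)$ be the set of measurable functions with values in $[0,\infty]$. A Banach function norm $\rho:\mathfrak{M}^+\to[0,\infty]$ satisfies, for all $f,g,f_j\in\mathfrak{M}^+$, $a\ge0$, measurable $E$: (A1) $\rho(f)=0\iff f=0$ a.e., $\rho(af)=a\rho(f)$, $\rho(f+g)\le\rho(f)+\rho(g)$; (A2) $0\le g\le f$ a.e. implies $\rho(g)\le\rho(f)$; (A3) $0\le f_j\uparrow f$ a.e. implies $\rho(f_j)\uparrow\rho(f)$; (A4) $|E|<\infty$ implies $\rho(\chi_E)<\infty$; (A5) $|E|<\infty$ implies $\int_Ef\le C_E\rho(f)$ with $C_E$ independent of $f$. $Y(\mathbb{R}^n)$ is the set of measurable complex $f$ with $\rho(|f|)<\infty$, $\|f\|_Y=\rho(|f|)$. $Y$ is translation-invariant if $\|u(\cdot-y)\|_Y=\|u\|_Y$ for all $y$, $u\in Y$. A weight is a measurable $w$ with $0<w<\infty$ a.e.; $Y(\mathbb{R}^n,w)=\{f: fw\in Y\}$ with $\|f\|_{Y(\mathbb{R}^n,w)}=\|fw\|_Y$. Weak doubling property: a Banach function space $Z(\mathbb{R}^n)$ has it if there is $\tau>1$ with $\liminf_{R\to\infty}\big(\inf_{y\in\mathbb{R}^n}\|\chi_{B(y,\tau R)}\|_{Z}/\|\chi_{B(y,R)}\|_{Z}\big)<\infty$, where $B(y,R)$ is the open ball of radius $R$ centered at $y$. *)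

theory Defs
  imports "HOL-Analysis.Analysis"
begin

text \<open>Banach function norms on R^n, modelled on a Euclidean space 'a with Lebesgue
measure; M+ is the set of Lebesgue measurable functions 'a => [0,\<infinity>] (ennreal).\<close>

definition banach_function_norm :: "(('a::euclidean_space \<Rightarrow> ennreal) \<Rightarrow> ennreal) \<Rightarrow> bool" where
  "banach_function_norm \<rho> \<longleftrightarrow>
    \<comment> \<open>(A1)\<close>
    (\<forall>f \<in> borel_measurable lebesgue. \<rho> f = 0 \<longleftrightarrow> (AE x in lebesgue. f x = 0)) \<and>
    (\<forall>f \<in> borel_measurable lebesgue. \<forall>a::real. a \<ge> 0 \<longrightarrow>
        \<rho> (\<lambda>x. ennreal a * f x) = ennreal a * \<rho> f) \<and>
    (\<forall>f \<in> borel_measurable lebesgue. \<forall>g \<in> borel_measurable lebesgue.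
        \<rho> (\<lambda>x. f x + g x) \<le> \<rho> f + \<rho> g) \<and>
    \<comment> \<open>(A2)\<close>
    (\<forall>f \<in> borel_measurable lebesgue. \<forall>g \<in> borel_measurable lebesgue.
        (AE x in lebesgue. g x \<le> f x) \<longrightarrow> \<rho> g \<le> \<rho> f) \<and>
    \<comment> \<open>(A3)\<close>
    (\<forall>F f. (\<forall>j. F j \<in> borel_measurable lebesgue) \<longrightarrow> f \<in> borel_measurable lebesgue \<longrightarrow>
        (AE x in lebesgue. incseq (\<lambda>j. F j x) \<and> (\<lambda>j. F j x) \<longlonglongrightarrow> f x) \<longrightarrow>
        (\<lambda>j. \<rho> (F j)) \<longlonglongrightarrow> \<rho> f) \<and>
    \<comment> \<open>(A4)\<close>
    (\<forall>E \<in> sets lebesgue. emeasure lebesgue E < \<infinity> \<longrightarrow> \<rho> (indicator E) < \<infinity>) \<and>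
    \<comment> \<open>(A5)\<close>
    (\<forall>E \<in> sets lebesgue. emeasure lebesgue E < \<infinity> \<longrightarrow>
        (\<exists>C::real. \<forall>f \<in> borel_measurable lebesgue.
            set_nn_integral lebesgue E f \<le> ennreal C * \<rho> f))"

definition Ynorm :: "(('a::euclidean_space \<Rightarrow> ennreal) \<Rightarrow> ennreal) \<Rightarrow> ('a \<Rightarrow> complex) \<Rightarrow> ennreal" where
  "Ynorm \<rho> f = \<rho> (\<lambda>x. ennreal (cmod (f x)))"

definition in_Y :: "(('a::euclidean_space \<Rightarrow> ennreal) \<Rightarrow> ennreal) \<Rightarrow> ('a \<Rightarrow> complex) \<Rightarrow> bool" where
  "in_Y \<rho> f \<longleftrightarrow> f \<in> borel_measurable lebesgue \<and> Ynorm \<rho> f < \<infinity>"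

definition translation_invariant :: "(('a::euclidean_space \<Rightarrow> ennreal) \<Rightarrow> ennreal) \<Rightarrow> bool" where
  "translation_invariant \<rho> \<longleftrightarrow>
     (\<forall>u y. in_Y \<rho> u \<longrightarrow> Ynorm \<rho> (\<lambda>x. u (x - y)) = Ynorm \<rho> u)"

definition is_weight :: "('a::euclidean_space \<Rightarrow> ennreal) \<Rightarrow> bool" where
  "is_weight w \<longleftrightarrow> w \<in> borel_measurable lebesgue \<and> (AE x in lebesgue. 0 < w x \<and> w x < \<infinity>)"

definition Linf_loc :: "('a::euclidean_space \<Rightarrow> ennreal) \<Rightarrow> bool" where
  "Linf_loc g \<longleftrightarrow> (\<forall>K. compact K \<longrightarrow> (\<exists>M::real. AE x in lebesgue. x \<in> K \<longrightarrow> g x \<le> ennreal M))"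

text \<open>Weak doubling property of a Banach function space Z, given through its function norm
nu on M+: ||chi_E||_Z = nu (indicator E).\<close>
definition weak_doubling :: "(('a::euclidean_space \<Rightarrow> ennreal) \<Rightarrow> ennreal) \<Rightarrow> bool" where
  "weak_doubling \<nu> \<longleftrightarrow> (\<exists>\<tau>::real. \<tau> > 1 \<and>
     Liminf at_top (\<lambda>R::real. INF y. \<nu> (indicator (ball y (\<tau> * R))) / \<nu> (indicator (ball y R))) < \<infinity>)"

end

theory Submission
  imports Defs
begin

text \<open>Along the ray through \<theta> the weight is comparable to exp (r \<phi>(r)), and since \<phi>(r) \<rightarrow> 0 the
exponent varies by at most 1 across a ball of fixed radius s once the ball is centred far enough
out (the cone condition also holds on the whole ball, since its angular size s/t tends to 0).
On such a ball the weight is constant up to the factor e C1/C0. Covering B(y,2R) by N translates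
of B(0,R) and using translation invariance of \<rho> then bounds the quotient in the weak doubling
condition by N e C1/C0. For the lower bound, B(0,R) contains the unit ball centred at (R-1)\<theta>,
on which w \<ge> C0 exp ((R-2) \<phi>(R-2)) \<ge> C0 exp (-2 \<phi>(1)) exp (R \<phi>(R)).\<close>

lemma banach_function_norm_zero:
  assumes "banach_function_norm \<rho>"
  shows "\<rho> (\<lambda>x. 0) = 0"
  using assms unfolding banach_function_norm_def by simp

lemma banach_function_norm_cmult:
  assumes "banach_function_norm \<rho>" "f \<in> borel_measurable lebesgue" "0 \<le> a"
  shows "\<rho> (\<lambda>x. ennreal a * f x) = ennreal a * \<rho> f"
  using assms unfolding banach_function_norm_def by simp

lemma banach_function_norm_add:
  assumes "banach_function_norm \<rho>" "f \<in> borel_measurable lebesgue" "g \<in> borel_measurable lebesgue"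
  shows "\<rho> (\<lambda>x. f x + g x) \<le> \<rho> f + \<rho> g"
  using assms unfolding banach_function_norm_def by simp

lemma banach_function_norm_mono:
  assumes "banach_function_norm \<rho>" "f \<in> borel_measurable lebesgue" "g \<in> borel_measurable lebesgue"
    and "\<And>x. g x \<le> f x"
  shows "\<rho> g \<le> \<rho> f"
proof -
  have "AE x in lebesgue. g x \<le> f x" using assms(4) by simp
  moreover have "\<forall>f\<in>borel_measurable lebesgue. \<forall>g\<in>borel_measurable lebesgue.
      (AE x in lebesgue. g x \<le> f x) \<longrightarrow> \<rho> g \<le> \<rho> f"
    using assms(1) unfolding banach_function_norm_def by (elim conjE)
  ultimately show ?thesis using assms(2,3) by blast
qed

lemma banach_function_norm_sum:
  assumes "banach_function_norm \<rho>" "finite I" "\<And>i. i \<in> I \<Longrightarrow> f i \<in> borel_measurable lebesgue"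
  shows "\<rho> (\<lambda>x. \<Sum>i\<in>I. f i x) \<le> (\<Sum>i\<in>I. \<rho> (f i))"
  using assms(2,3)
proof (induction I rule: finite_induct)
  case empty
  then show ?case using banach_function_norm_zero[OF assms(1)] by simp
next
  case (insert i I)
  have "\<rho> (\<lambda>x. \<Sum>j\<in>insert i I. f j x) = \<rho> (\<lambda>x. f i x + (\<Sum>j\<in>I. f j x))"
    using insert by simp
  also have "\<dots> \<le> \<rho> (f i) + \<rho> (\<lambda>x. \<Sum>j\<in>I. f j x)"
    using insert by (intro banach_function_norm_add[OF assms(1)] borel_measurable_sum) auto
  also have "\<dots> \<le> \<rho> (f i) + (\<Sum>j\<in>I. \<rho> (f j))"
    using insert by (intro add_left_mono) auto
  finally show ?case using insert by simp
qed

lemma banach_function_norm_indicator_finite: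
  assumes "banach_function_norm \<rho>" "E \<in> sets lebesgue" "emeasure lebesgue E < \<infinity>"
  shows "\<rho> (indicator E) < \<infinity>"
proof -
  have "\<forall>E \<in> sets lebesgue. emeasure lebesgue E < \<infinity> \<longrightarrow> \<rho> (indicator E) < \<infinity>"
    using assms(1) unfolding banach_function_norm_def by (elim conjE)
  then show ?thesis using assms(2,3) by blast
qed

lemma banach_function_norm_indicator_pos:
  assumes "banach_function_norm \<rho>" "E \<in> sets lebesgue" "emeasure lebesgue E \<noteq> 0"
  shows "0 < \<rho> (indicator E)"
proof (rule ccontr)
  assume "\<not> 0 < \<rho> (indicator E)"
  moreover have "\<forall>f \<in> borel_measurable lebesgue. \<rho> f = 0 \<longleftrightarrow> (AE x in lebesgue. f x = 0)"
    using assms(1) unfolding banach_function_norm_def by (elim conjE)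
  ultimately have "AE x in lebesgue. (indicator E x :: ennreal) = 0"
    using assms(2) by simp
  then have "AE x in lebesgue. x \<notin> E"
    by eventually_elim (simp split: split_indicator_asm)
  then have "emeasure lebesgue E = 0"
    using AE_iff_measurable[OF assms(2)] by simp
  with assms(3) show False by contradiction
qed

lemma translation_invariant_indicator:
  assumes "banach_function_norm \<rho>" "translation_invariant \<rho>"
    and "E \<in> sets lebesgue" "emeasure lebesgue E < \<infinity>"
  shows "\<rho> (indicator ((+) y ` E)) = \<rho> (indicator E)"
proof -
  define u :: "'a \<Rightarrow> complex" where "u = indicator E"
  have norm_u: "(\<lambda>x. ennreal (cmod (u x))) = indicator E"
    by (auto simp: u_def split: split_indicator)
  have "x \<in> (+) y ` E \<longleftrightarrow> x - y \<in> E" for x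
    by (metis (no_types, lifting) add_diff_cancel_left' diff_add_cancel add.commute image_iff)
  then have norm_shifted_u: "(\<lambda>x. ennreal (cmod (u (x - y)))) = indicator ((+) y ` E)"
    by (auto simp: u_def split: split_indicator)
  have "in_Y \<rho> u"
    unfolding in_Y_def Ynorm_def norm_u
    using banach_function_norm_indicator_finite[OF assms(1,3,4)] assms(3) by (simp add: u_def)
  then have "Ynorm \<rho> (\<lambda>x. u (x - y)) = Ynorm \<rho> u"
    using assms(2) unfolding translation_invariant_def by blast
  then show ?thesis by (simp add: Ynorm_def norm_u norm_shifted_u)
qed

lemma emeasure_lebesgue_ball_finite: "emeasure lebesgue (ball (y::'a::euclidean_space) r) < \<infinity>"
  using emeasure_lborel_ball_finite[of y r] by simp

lemma translation_invariant_ball: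
  assumes "banach_function_norm \<rho>" "translation_invariant \<rho>"
  shows "\<rho> (indicator (ball y r)) = \<rho> (indicator (ball (0::'a::euclidean_space) r))"
  using translation_invariant_indicator[OF assms _ emeasure_lebesgue_ball_finite, of 0 r y]
    ball_translation[of y 0 r] by simp

lemma banach_function_norm_ball_pos:
  assumes "banach_function_norm \<rho>" "0 < r"
  shows "0 < \<rho> (indicator (ball (y::'a::euclidean_space) r))"
proof (rule banach_function_norm_indicator_pos[OF assms(1)])
  have "unit_ball_vol (real DIM('a)) \<noteq> 0"
    using unit_ball_vol_pos[of "real DIM('a)"] by linarith
  with assms(2) show "emeasure lebesgue (ball y r) \<noteq> 0"
    by (simp add: emeasure_ball)
qed simp

lemma banach_function_norm_weighted_indicator_le:
  assumes bfn: "banach_function_norm \<rho>" and "w \<in> borel_measurable lebesgue" "E \<in> sets lebesgue"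
    and bound: "\<And>x. x \<in> E \<Longrightarrow> w x \<le> ennreal b"
  shows "\<rho> (\<lambda>x. indicator E x * w x) \<le> ennreal b * \<rho> (indicator E)"
proof -
  have "\<rho> (\<lambda>x. indicator E x * w x) \<le> \<rho> (\<lambda>x. ennreal (max 0 b) * indicator E x)"
    using assms(2,3) bound
    by (intro banach_function_norm_mono[OF bfn]) (auto simp: ennreal_max_0 split: split_indicator)
  also have "\<dots> = ennreal b * \<rho> (indicator E)"
    using banach_function_norm_cmult[OF bfn borel_measurable_indicator[OF assms(3)], of "max 0 b"]
    by (simp add: ennreal_max_0)
  finally show ?thesis .
qed

lemma banach_function_norm_weighted_indicator_ge:
  assumes bfn: "banach_function_norm \<rho>" and "w \<in> borel_measurable lebesgue"
    and "E \<in> sets lebesgue" "F \<in> sets lebesgue" "F \<subseteq> E"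
    and bound: "\<And>x. x \<in> F \<Longrightarrow> ennreal a \<le> w x"
  shows "ennreal a * \<rho> (indicator F) \<le> \<rho> (\<lambda>x. indicator E x * w x)"
proof -
  have "ennreal a * \<rho> (indicator F) = \<rho> (\<lambda>x. ennreal (max 0 a) * indicator F x)"
    using banach_function_norm_cmult[OF bfn borel_measurable_indicator[OF assms(4)], of "max 0 a"]
    by (simp add: ennreal_max_0)
  also have "\<dots> \<le> \<rho> (\<lambda>x. indicator E x * w x)"
    using assms(2-5) bound
    by (intro banach_function_norm_mono[OF bfn]) (auto simp: ennreal_max_0 split: split_indicator)
  finally show ?thesis .
qed

lemma banach_function_norm_ball_dilation:
  fixes \<rho> :: "('a::euclidean_space \<Rightarrow> ennreal) \<Rightarrow> ennreal"
  assumes bfn: "banach_function_norm \<rho>" and ti: "translation_invariant \<rho>"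
  obtains N :: nat where
    "\<And>y R. 0 < R \<Longrightarrow> \<rho> (indicator (ball y (\<tau> * R))) \<le> of_nat N * \<rho> (indicator (ball (0::'a) R))"
proof -
  have "compact (cball (0::'a) \<tau>)" by simp
  then obtain F where F: "F \<subseteq> cball 0 \<tau>" "finite F" "cball (0::'a) \<tau> \<subseteq> (\<Union>c\<in>F. ball c 1)"
    by (rule compactE_image[where C="cball 0 \<tau>" and f="\<lambda>c. ball c 1"]) auto
  show thesis
  proof (rule that[of "card F"])
    fix y :: 'a and R :: real assume R: "0 < R"
    have cover: "indicator (ball y (\<tau> * R)) x \<le> (\<Sum>c\<in>F. indicator (ball (y + R *\<^sub>R c) R) x :: ennreal)"
      for x
    proof (cases "x \<in> ball y (\<tau> * R)")
      case True
      have "norm ((1 / R) *\<^sub>R (x - y)) = dist y x / R"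
        using R by (simp add: dist_norm norm_minus_commute)
      also have "\<dots> < \<tau>" using True R by (simp add: divide_less_eq mult.commute)
      finally have "(1 / R) *\<^sub>R (x - y) \<in> cball 0 \<tau>" by simp
      then obtain c where c: "c \<in> F" "(1 / R) *\<^sub>R (x - y) \<in> ball c 1"
        using F(3) by blast
      have "dist (y + R *\<^sub>R c) x = R * dist c ((1 / R) *\<^sub>R (x - y))"
      proof -
        have "y + R *\<^sub>R c - x = R *\<^sub>R (c - (1 / R) *\<^sub>R (x - y))"
          using R by (simp add: algebra_simps)
        then show ?thesis using R by (simp add: dist_norm)
      qed
      also have "\<dots> < R" using c(2) R by simp
      finally have "indicator (ball (y + R *\<^sub>R c) R) x = (1::ennreal)" by simp
      then show ?thesis
        using True member_le_sum[OF c(1), of "\<lambda>c. indicator (ball (y + R *\<^sub>R c) R) x :: ennreal"] F(2)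
        by simp
    qed simp
    have "\<rho> (indicator (ball y (\<tau> * R))) \<le> \<rho> (\<lambda>x. \<Sum>c\<in>F. indicator (ball (y + R *\<^sub>R c) R) x)"
      using cover by (intro banach_function_norm_mono[OF bfn] borel_measurable_sum borel_measurable_indicator) auto
    also have "\<dots> \<le> (\<Sum>c\<in>F. \<rho> (indicator (ball (y + R *\<^sub>R c) R)))"
      using F(2) by (intro banach_function_norm_sum[OF bfn] borel_measurable_indicator) auto
    also have "\<dots> = (\<Sum>c\<in>F. \<rho> (indicator (ball 0 R)))"
      by (intro sum.cong refl translation_invariant_ball[OF bfn ti])
    also have "\<dots> = of_nat (card F) * \<rho> (indicator (ball 0 R))"
      by simp
    finally show "\<rho> (indicator (ball y (\<tau> * R))) \<le> of_nat (card F) * \<rho> (indicator (ball 0 R))" .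
  qed
qed

lemma weak_doubling_weightI:
  fixes \<rho> :: "('a::euclidean_space \<Rightarrow> ennreal) \<Rightarrow> ennreal" and w :: "'a \<Rightarrow> ennreal"
  assumes bfn: "banach_function_norm \<rho>" and ti: "translation_invariant \<rho>"
    and wm: "w \<in> borel_measurable lebesgue" and "1 < \<tau>"
    and nearly_constant: "\<forall>\<^sub>F R in at_top. \<exists>y a. 0 < a \<and>
      (\<forall>x\<in>ball y R. ennreal a \<le> w x) \<and> (\<forall>x\<in>ball y (\<tau> * R). w x \<le> ennreal (K * a))"
  shows "weak_doubling (\<lambda>g. \<rho> (\<lambda>x. g x * w x))"
proof -
  obtain N where N: "\<And>y R. 0 < R \<Longrightarrow>
      \<rho> (indicator (ball y (\<tau> * R))) \<le> of_nat N * \<rho> (indicator (ball (0::'a) R))"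
    using banach_function_norm_ball_dilation[OF bfn ti] by blast
  have "\<forall>\<^sub>F R in at_top. (INF y. \<rho> (\<lambda>x. indicator (ball y (\<tau> * R)) x * w x) /
      \<rho> (\<lambda>x. indicator (ball y R) x * w x)) \<le> ennreal K * of_nat N"
    using nearly_constant eventually_gt_at_top[of 0]
  proof eventually_elim
    case (elim R)
    then obtain y a where a: "0 < a" and lower: "\<forall>x\<in>ball y R. ennreal a \<le> w x"
      and upper: "\<forall>x\<in>ball y (\<tau> * R). w x \<le> ennreal (K * a)"
      by blast
    define P where "P = \<rho> (indicator (ball (0::'a) R))"
    have lower_norm: "ennreal a * P \<le> \<rho> (\<lambda>x. indicator (ball y R) x * w x)"
      using banach_function_norm_weighted_indicator_ge[OF bfn wm, of "ball y R" "ball y R" a] lower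
      by (simp add: P_def translation_invariant_ball[OF bfn ti, of y R])
    have "\<rho> (\<lambda>x. indicator (ball y (\<tau> * R)) x * w x) \<le> ennreal (K * a) * \<rho> (indicator (ball y (\<tau> * R)))"
      using upper by (intro banach_function_norm_weighted_indicator_le[OF bfn wm]) auto
    also have "\<dots> \<le> ennreal (K * a) * (of_nat N * P)"
      using N elim by (intro mult_left_mono) (auto simp: P_def)
    also have "\<dots> = (ennreal K * of_nat N) * (ennreal a * P)"
      using a by (simp add: ennreal_mult'' mult_ac)
    also have "\<dots> \<le> (ennreal K * of_nat N) * \<rho> (\<lambda>x. indicator (ball y R) x * w x)"
      using lower_norm by (rule mult_left_mono) simp
    finally have "\<rho> (\<lambda>x. indicator (ball y (\<tau> * R)) x * w x)
        \<le> \<rho> (\<lambda>x. indicator (ball y R) x * w x) * (ennreal K * of_nat N)"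
      by (simp add: mult.commute)
    moreover have "0 < \<rho> (\<lambda>x. indicator (ball y R) x * w x)"
    proof -
      have "0 < ennreal a * P"
        using a banach_function_norm_ball_pos[OF bfn elim(2), of 0]
        by (simp add: P_def ennreal_zero_less_mult_iff)
      then show ?thesis using lower_norm by (rule less_le_trans)
    qed
    ultimately have "\<rho> (\<lambda>x. indicator (ball y (\<tau> * R)) x * w x) / \<rho> (\<lambda>x. indicator (ball y R) x * w x)
        \<le> ennreal K * of_nat N"
      by (intro divide_le_posI_ennreal)
    then show ?case by (rule INF_lower2[OF UNIV_I])
  qed
  then have "Liminf at_top (\<lambda>R. INF y. \<rho> (\<lambda>x. indicator (ball y (\<tau> * R)) x * w x) /
      \<rho> (\<lambda>x. indicator (ball y R) x * w x)) \<le> ennreal K * of_nat N"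
    by (intro Liminf_le) simp_all
  also have "\<dots> < \<infinity>" by (simp add: ennreal_mult_less_top of_nat_less_top)
  finally show ?thesis unfolding weak_doubling_def using \<open>1 < \<tau>\<close> by blast
qed

lemma ray_ball_in_cone:
  fixes x \<theta> :: "'a::real_normed_vector"
  assumes "norm \<theta> = 1" "0 < s" "s < t" "2 * s / t \<le> \<gamma>" "x \<in> ball (t *\<^sub>R \<theta>) s"
  shows "t - s < norm x \<and> norm x < t + s \<and> norm (x /\<^sub>R norm x - \<theta>) < \<gamma>"
proof -
  have x: "norm (x - t *\<^sub>R \<theta>) < s"
    using assms(5) by (simp add: dist_norm norm_minus_commute)
  have dist_t: "\<bar>norm x - t\<bar> < s"
    using norm_triangle_ineq3[of x "t *\<^sub>R \<theta>"] x assms(1-3) by simp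
  then have "0 < norm x" using assms(3) by linarith
  have "(t - norm x) / t / norm x = 1 / norm x - 1 / t"
    using \<open>0 < norm x\<close> assms(2,3) by (simp add: field_simps)
  then have "((t - norm x) / t) *\<^sub>R (x /\<^sub>R norm x) = (1 / norm x - 1 / t) *\<^sub>R x"
    by (simp add: divide_inverse)
  then have "x /\<^sub>R norm x - \<theta> = ((t - norm x) / t) *\<^sub>R (x /\<^sub>R norm x) + (1 / t) *\<^sub>R (x - t *\<^sub>R \<theta>)"
    using assms(2,3) by (simp add: algebra_simps divide_inverse)
  then have "norm (x /\<^sub>R norm x - \<theta>)
      \<le> norm (((t - norm x) / t) *\<^sub>R (x /\<^sub>R norm x)) + norm ((1 / t) *\<^sub>R (x - t *\<^sub>R \<theta>))"
    by (metis norm_triangle_ineq)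
  also have "\<dots> = \<bar>norm x - t\<bar> / t + norm (x - t *\<^sub>R \<theta>) / t"
    using \<open>0 < norm x\<close> assms(2,3) by (simp add: abs_minus_commute abs_mult)
  also have "\<dots> < s / t + s / t"
    using dist_t x assms(2,3) by (intro add_strict_mono divide_strict_right_mono) auto
  also have "\<dots> \<le> \<gamma>" using assms(4) by simp
  finally show ?thesis using dist_t by auto
qed

lemma ball_ray_subset_ball:
  fixes \<theta> :: "'a::real_normed_vector"
  assumes "norm \<theta> = 1" "0 \<le> t"
  shows "ball (t *\<^sub>R \<theta>) s \<subseteq> ball 0 (t + s)"
proof
  fix x assume "x \<in> ball (t *\<^sub>R \<theta>) s"
  then have "norm (x - t *\<^sub>R \<theta>) < s" by (simp add: dist_norm norm_minus_commute)
  then show "x \<in> ball 0 (t + s)"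
    using norm_triangle_ineq2[of x "t *\<^sub>R \<theta>"] assms by simp
qed

lemma antimono_shifted_product_le:
  fixes \<phi> :: "real \<Rightarrow> real"
  assumes antimono: "\<And>r s. 0 < r \<Longrightarrow> r \<le> s \<Longrightarrow> \<phi> s \<le> \<phi> r" and "0 < r" "0 \<le> h"
  shows "(r + h) * \<phi> (r + h) \<le> r * \<phi> r + h * \<phi> r"
proof -
  have "(r + h) * \<phi> (r + h) \<le> (r + h) * \<phi> r"
    using assms by (intro mult_left_mono) auto
  then show ?thesis by (simp add: algebra_simps)
qed

lemma eventually_antimono_shifted_product_le:
  fixes \<phi> :: "real \<Rightarrow> real"
  assumes antimono: "\<And>r s. 0 < r \<Longrightarrow> r \<le> s \<Longrightarrow> \<phi> s \<le> \<phi> r" and "(\<phi> \<longlongrightarrow> 0) at_top"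
    and "0 \<le> s" "0 < \<epsilon>"
  shows "\<forall>\<^sub>F t in at_top. (t + s) * \<phi> (t + s) \<le> (t - s) * \<phi> (t - s) + \<epsilon>"
proof -
  have "((\<lambda>u. 2 * s * \<phi> u) \<longlongrightarrow> 0) at_top"
    using assms(2) by (rule tendsto_mult_right_zero)
  then have "\<forall>\<^sub>F u in at_top. 2 * s * \<phi> u < \<epsilon>"
    using assms(4) by (rule order_tendstoD(2))
  then obtain U where U: "\<And>u. U \<le> u \<Longrightarrow> 2 * s * \<phi> u < \<epsilon>"
    by (auto simp: eventually_at_top_linorder)
  show ?thesis
    using eventually_ge_at_top[of "max (U + s) (s + 1)"]
  proof eventually_elim
    case (elim t)
    have "(t + s) * \<phi> (t + s) = ((t - s) + 2 * s) * \<phi> ((t - s) + 2 * s)" by (simp add: add.commute)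
    also have "\<dots> \<le> (t - s) * \<phi> (t - s) + 2 * s * \<phi> (t - s)"
      using elim assms(3) by (intro antimono_shifted_product_le[OF antimono]) auto
    also have "\<dots> \<le> (t - s) * \<phi> (t - s) + \<epsilon>"
      using U[of "t - s"] elim by simp
    finally show ?case .
  qed
qed

locale exp_weight_on_cone =
  fixes \<phi> :: "real \<Rightarrow> real" and \<theta> :: "'a::real_normed_vector" and \<gamma> C\<^sub>0 C\<^sub>1 :: real
    and w :: "'a \<Rightarrow> ennreal"
  assumes phi_antimono: "\<And>r s. 0 < r \<Longrightarrow> r \<le> s \<Longrightarrow> \<phi> s \<le> \<phi> r"
    and phi_tendsto_0: "(\<phi> \<longlongrightarrow> 0) at_top"
    and rphi_mono: "\<And>r s. 1 \<le> r \<Longrightarrow> r \<le> s \<Longrightarrow> r * \<phi> r \<le> s * \<phi> s"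
    and norm_theta: "norm \<theta> = 1" and C0_pos: "0 < C\<^sub>0" and C1_pos: "0 < C\<^sub>1" and gamma_pos: "0 < \<gamma>"
    and w_bounds: "\<And>x. norm x \<ge> 1 \<Longrightarrow> norm (x /\<^sub>R norm x - \<theta>) < \<gamma> \<Longrightarrow>
          ennreal (C\<^sub>0 * exp (norm x * \<phi> (norm x))) \<le> w x \<and>
          w x \<le> ennreal (C\<^sub>1 * exp (norm x * \<phi> (norm x)))"
begin

lemma bounds_on_ray_ball:
  assumes "0 < s" "s + 1 \<le> t" "2 * s / t \<le> \<gamma>" "x \<in> ball (t *\<^sub>R \<theta>) s"
  shows "ennreal (C\<^sub>0 * exp ((t - s) * \<phi> (t - s))) \<le> w x \<and>
    w x \<le> ennreal (C\<^sub>1 * exp ((t + s) * \<phi> (t + s)))"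
proof -
  have cone: "t - s < norm x" "norm x < t + s" "norm (x /\<^sub>R norm x - \<theta>) < \<gamma>"
    using ray_ball_in_cone[OF norm_theta assms(1) _ assms(3,4)] assms(2) by auto
  have "1 \<le> norm x" using cone assms(2) by linarith
  have "ennreal (C\<^sub>0 * exp ((t - s) * \<phi> (t - s))) \<le> ennreal (C\<^sub>0 * exp (norm x * \<phi> (norm x)))"
    using rphi_mono[of "t - s" "norm x"] cone assms(2) C0_pos
    by (intro ennreal_leI mult_left_mono) auto
  moreover have "ennreal (C\<^sub>1 * exp (norm x * \<phi> (norm x))) \<le> ennreal (C\<^sub>1 * exp ((t + s) * \<phi> (t + s)))"
    using rphi_mono[OF \<open>1 \<le> norm x\<close>, of "t + s"] cone C1_pos
    by (intro ennreal_leI mult_left_mono) auto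
  ultimately show ?thesis
    using w_bounds[OF \<open>1 \<le> norm x\<close> cone(3)] by (meson order_trans)
qed

lemma nearly_constant_on_ball:
  assumes "0 < s"
  obtains y a where "0 < a" "\<And>x. x \<in> ball y s \<Longrightarrow> ennreal a \<le> w x"
    "\<And>x. x \<in> ball y s \<Longrightarrow> w x \<le> ennreal (C\<^sub>1 * exp 1 / C\<^sub>0 * a)"
proof -
  have "\<forall>\<^sub>F t in at_top. s + 1 \<le> t \<and> 2 * s / \<gamma> \<le> t \<and>
      (t + s) * \<phi> (t + s) \<le> (t - s) * \<phi> (t - s) + 1"
    using eventually_ge_at_top[of "s + 1"] eventually_ge_at_top[of "2 * s / \<gamma>"]
      eventually_antimono_shifted_product_le[of \<phi> s 1, OF phi_antimono phi_tendsto_0] assms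
    by (simp add: eventually_conj)
  then obtain t where t: "s + 1 \<le> t" "2 * s / \<gamma> \<le> t"
    and gap: "(t + s) * \<phi> (t + s) \<le> (t - s) * \<phi> (t - s) + 1"
    by (auto simp: eventually_at_top_linorder)
  have "2 * s / t \<le> \<gamma>"
    using t assms gamma_pos by (simp add: divide_le_eq mult.commute pos_divide_le_eq)
  note bounds = bounds_on_ray_ball[OF assms t(1) this]
  show thesis
  proof (rule that[of "C\<^sub>0 * exp ((t - s) * \<phi> (t - s))" "t *\<^sub>R \<theta>"])
    fix x assume x: "x \<in> ball (t *\<^sub>R \<theta>) s"
    have "exp ((t + s) * \<phi> (t + s)) \<le> exp 1 * exp ((t - s) * \<phi> (t - s))"
      using gap by (simp add: mult_exp_exp)
    then have "C\<^sub>1 * exp ((t + s) * \<phi> (t + s)) \<le> C\<^sub>1 * exp 1 / C\<^sub>0 * (C\<^sub>0 * exp ((t - s) * \<phi> (t - s)))"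
      using C0_pos C1_pos by (simp add: mult_left_mono)
    then show "w x \<le> ennreal (C\<^sub>1 * exp 1 / C\<^sub>0 * (C\<^sub>0 * exp ((t - s) * \<phi> (t - s))))"
      using bounds[OF x] ennreal_leI order_trans by blast
  qed (use C0_pos bounds in auto)
qed

lemma lower_bound_on_far_ball:
  assumes "3 \<le> R" "2 / \<gamma> + 2 \<le> R" "x \<in> ball ((R - 1) *\<^sub>R \<theta>) 1"
  shows "ennreal (C\<^sub>0 * exp (- 2 * \<phi> 1) * exp (R * \<phi> R)) \<le> w x"
proof -
  have "2 / \<gamma> \<le> R - 1" using assms(2) by simp
  then have "2 \<le> \<gamma> * (R - 1)" using gamma_pos by (simp add: pos_divide_le_eq mult.commute)
  then have "2 * 1 / (R - 1) \<le> \<gamma>" using assms(1) by (simp add: divide_le_eq mult.commute)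
  then have "ennreal (C\<^sub>0 * exp ((R - 1 - 1) * \<phi> (R - 1 - 1))) \<le> w x"
    using bounds_on_ray_ball[of 1 "R - 1" x] assms by auto
  then have "ennreal (C\<^sub>0 * exp ((R - 2) * \<phi> (R - 2))) \<le> w x" by simp
  moreover have "R * \<phi> R - 2 * \<phi> 1 \<le> (R - 2) * \<phi> (R - 2)"
  proof -
    have "R * \<phi> R \<le> (R - 2) * \<phi> (R - 2) + 2 * \<phi> (R - 2)"
      using antimono_shifted_product_le[of \<phi> "R - 2" 2, OF phi_antimono] assms(1) by simp
    moreover have "\<phi> (R - 2) \<le> \<phi> 1" using phi_antimono[of 1 "R - 2"] assms(1) by simp
    ultimately show ?thesis by simp
  qed
  then have "exp (- 2 * \<phi> 1) * exp (R * \<phi> R) \<le> exp ((R - 2) * \<phi> (R - 2))"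
    by (simp add: mult_exp_exp)
  then have "C\<^sub>0 * exp (- 2 * \<phi> 1) * exp (R * \<phi> R) \<le> C\<^sub>0 * exp ((R - 2) * \<phi> (R - 2))"
    using C0_pos by (simp add: mult.assoc mult_left_mono)
  ultimately show ?thesis using ennreal_leI order_trans by blast
qed

end

lemma weak_doubling_exp_weight_on_cone:
  fixes \<rho> :: "('a::euclidean_space \<Rightarrow> ennreal) \<Rightarrow> ennreal"
  assumes bfn: "banach_function_norm \<rho>" and ti: "translation_invariant \<rho>"
    and wm: "w \<in> borel_measurable lebesgue" and "exp_weight_on_cone \<phi> \<theta> \<gamma> C\<^sub>0 C\<^sub>1 w"
  shows "weak_doubling (\<lambda>g. \<rho> (\<lambda>x. g x * w x))"
proof (rule weak_doubling_weightI[OF bfn ti wm, of 2 "C\<^sub>1 * exp 1 / C\<^sub>0"])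
  interpret exp_weight_on_cone \<phi> \<theta> \<gamma> C\<^sub>0 C\<^sub>1 w by fact
  show "\<forall>\<^sub>F R in at_top. \<exists>y a. 0 < a \<and> (\<forall>x\<in>ball y R. ennreal a \<le> w x) \<and>
      (\<forall>x\<in>ball y (2 * R). w x \<le> ennreal (C\<^sub>1 * exp 1 / C\<^sub>0 * a))"
    using eventually_gt_at_top[of 0]
  proof eventually_elim
    case (elim R)
    obtain y a where "0 < a" "\<And>x. x \<in> ball y (2 * R) \<Longrightarrow> ennreal a \<le> w x"
      "\<And>x. x \<in> ball y (2 * R) \<Longrightarrow> w x \<le> ennreal (C\<^sub>1 * exp 1 / C\<^sub>0 * a)"
      by (rule nearly_constant_on_ball[of "2 * R"]) (use elim in auto)
    then show ?case using elim by (intro exI[of _ y] exI[of _ a]) auto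
  qed
qed simp

lemma exp_weight_on_cone_ball_norm_lower_bound:
  fixes \<rho> :: "('a::euclidean_space \<Rightarrow> ennreal) \<Rightarrow> ennreal"
  assumes bfn: "banach_function_norm \<rho>" and ti: "translation_invariant \<rho>"
    and wm: "w \<in> borel_measurable lebesgue" and "exp_weight_on_cone \<phi> \<theta> \<gamma> C\<^sub>0 C\<^sub>1 w"
  shows "\<exists>C>0. \<forall>\<^sub>F R in at_top. \<rho> (\<lambda>x. indicator (ball 0 R) x * w x) \<ge> ennreal (C * exp (R * \<phi> R))"
proof -
  interpret exp_weight_on_cone \<phi> \<theta> \<gamma> C\<^sub>0 C\<^sub>1 w by fact
  obtain p where p: "0 < p" "\<rho> (indicator (ball (0::'a) 1)) = ennreal p"
  proof -
    have "\<rho> (indicator (ball (0::'a) 1)) < \<infinity>"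
      by (rule banach_function_norm_indicator_finite[OF bfn _ emeasure_lebesgue_ball_finite]) simp
    moreover have "0 < \<rho> (indicator (ball (0::'a) 1))"
      by (rule banach_function_norm_ball_pos[OF bfn]) simp
    ultimately show thesis
      using that by (cases "\<rho> (indicator (ball (0::'a) 1))") auto
  qed
  have "\<forall>\<^sub>F R in at_top. \<rho> (\<lambda>x. indicator (ball 0 R) x * w x) \<ge>
      ennreal (C\<^sub>0 * exp (- 2 * \<phi> 1) * p * exp (R * \<phi> R))"
    using eventually_ge_at_top[of "max 3 (2 / \<gamma> + 2)"]
  proof eventually_elim
    case (elim R)
    have "ennreal (C\<^sub>0 * exp (- 2 * \<phi> 1) * exp (R * \<phi> R)) * \<rho> (indicator (ball ((R - 1) *\<^sub>R \<theta>) 1))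
        \<le> \<rho> (\<lambda>x. indicator (ball 0 R) x * w x)"
      using ball_ray_subset_ball[OF norm_theta, of "R - 1" 1] elim
      by (intro banach_function_norm_weighted_indicator_ge[OF bfn wm] lower_bound_on_far_ball) auto
    then show ?case
      using p translation_invariant_ball[OF bfn ti, of "(R - 1) *\<^sub>R \<theta>" 1]
      by (simp add: ennreal_mult'' mult_ac)
  qed
  moreover have "0 < C\<^sub>0 * exp (- 2 * \<phi> 1) * p" using C0_pos p by simp
  ultimately show ?thesis by blast
qed

theorem lemma3p10:
  fixes \<rho> :: "('a::euclidean_space \<Rightarrow> ennreal) \<Rightarrow> ennreal"
    and \<phi> :: "real \<Rightarrow> real"
    and w :: "'a \<Rightarrow> ennreal"
    and C\<^sub>0 C\<^sub>1 \<gamma> :: real and \<theta> :: 'a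
  assumes bfn: "banach_function_norm \<rho>"
    and ti: "translation_invariant \<rho>"
    and phi_mono: "\<And>r s. 0 < r \<Longrightarrow> r \<le> s \<Longrightarrow> \<phi> s \<le> \<phi> r"
    and phi_lim: "(\<phi> \<longlongrightarrow> 0) at_top"
    and rphi_mono: "\<And>r s. 1 \<le> r \<Longrightarrow> r \<le> s \<Longrightarrow> r * \<phi> r \<le> s * \<phi> s"
    and weight: "is_weight w"
    and w_loc: "Linf_loc w"
    and winv_loc: "Linf_loc (\<lambda>x. 1 / w x)"
    and C0: "C\<^sub>0 > 0" and C1: "C\<^sub>1 > 0" and gam: "\<gamma> > 0" and theta: "norm \<theta> = 1"
    and w_bounds: "\<And>x. norm x \<ge> 1 \<Longrightarrow> norm (x /\<^sub>R norm x - \<theta>) < \<gamma> \<Longrightarrow>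
          ennreal (C\<^sub>0 * exp (norm x * \<phi> (norm x))) \<le> w x \<and>
          w x \<le> ennreal (C\<^sub>1 * exp (norm x * \<phi> (norm x)))"
  shows "weak_doubling (\<lambda>g. \<rho> (\<lambda>x. g x * w x)) \<and>
    (\<exists>C>0. \<forall>\<^sub>F R in at_top.
       \<rho> (\<lambda>x. indicator (ball 0 R) x * w x) \<ge> ennreal (C * exp (R * \<phi> R)))"
proof -
  have "w \<in> borel_measurable lebesgue" using weight by (simp add: is_weight_def)
  moreover have "exp_weight_on_cone \<phi> \<theta> \<gamma> C\<^sub>0 C\<^sub>1 w"
    by unfold_locales (fact assms)+
  ultimately show ?thesis
    using weak_doubling_exp_weight_on_cone[OF bfn ti] exp_weight_on_cone_ball_norm_lower_bound[OF bfn ti]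
    by blast
qed

end
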